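(* Let $s$ be a stream type and $p$ a prefix with $p : s$, and let $s'$ be the stream type with $\delta_p s \sim s'$. Then $\mathrm{emp}(s) \cdot p \sim p$ and $p \cdot \mathrm{emp}(s') \sim p$.
   Context: Stream types are generated by $s,t ::= 1 \mid \varepsilon \mid s\cdot t \mid s\,\|\,t \mid s+t \mid s^\star$. Prefixes are generated by $p ::= \mathtt{oneEmp} \mid \mathtt{oneFull} \mid \mathtt{epsEmp} \mid \mathtt{par}(p,p') \mid \mathtt{catA}(p) \mid \mathtt{catB}(p,p') \mid \mathtt{sumEmp} \mid \mathtt{inl}(p) \mid \mathtt{inr}(p) \mid \mathtt{starEmp} \mid \mathtt{starDone} \mid \mathtt{stA}(p) \mid \mathtt{stB}(p,p')$. Maximality (inductive): $\mathtt{epsEmp}$, $\mathtt{oneFull}$, $\mathtt{starDone}$ are maximal; $\mathtt{par}(p_1,p_2)$, $\mathtt{catB}(p_1,p_2)$, $\mathtt{stB}(p_1,p_2)$ are maximal if $p_1$ and $p_2$ are; $\mathtt{inl}(p)$, $\mathtt{inr}(p)$ are maximal if $p$ is. Prefix typing $p : s$ (inductive): $\mathtt{epsEmp}:\varepsilon$; $\mathtt{oneEmp}:1$; $\mathtt{oneFull}:1$; $\mathtt{par}(p_1,p_2): s\|t$ if $p_1:s$, $p_2:t$; $\mathtt{catA}(p): s\cdot t$ if $p:s$; $\mathtt{catB}(p_1,p_2): s\cdot t$ if $p_1:s$, $p_1$ maximal, $p_2:t$; $\mathtt{sumEmp}: s+t$; $\mathtt{inl}(p):s+t$ if $p:s$;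 $\mathtt{inr}(p):s+t$ if $p:t$; $\mathtt{starEmp}:s^\star$; $\mathtt{starDone}:s^\star$; $\mathtt{stA}(p):s^\star$ if $p:s$; $\mathtt{stB}(p,p'):s^\star$ if $p:s$, $p$ maximal, $p':s^\star$. Empty prefix: $\mathrm{emp}(\varepsilon)=\mathtt{epsEmp}$, $\mathrm{emp}(1)=\mathtt{oneEmp}$, $\mathrm{emp}(s\|t)=\mathtt{par}(\mathrm{emp}(s),\mathrm{emp}(t))$, $\mathrm{emp}(s+t)=\mathtt{sumEmp}$, $\mathrm{emp}(s\cdot t)=\mathtt{catA}(\mathrm{emp}(s))$, $\mathrm{emp}(s^\star)=\mathtt{starEmp}$. Derivative relation $\delta_p s \sim s'$ (inductive): $\delta_{\mathtt{epsEmp}}\varepsilon\sim\varepsilon$; $\delta_{\mathtt{oneEmp}}1\sim 1$; $\delta_{\mathtt{oneFull}}1\sim\varepsilon$; $\delta_{\mathtt{par}(p_1,p_2)}(s\|t)\sim s'\|t'$ if $\delta_{p_1}s\sim s'$, $\delta_{p_2}t\sim t'$; $\delta_{\mathtt{catA}(p)}(s\cdot t)\sim s'\cdot t$ if $\delta_p s\sim s'$; $\delta_{\mathtt{catB}(p_1,p_2)}(s\cdot t)\sim t'$ if $\delta_{p_2}t\sim t'$; $\delta_{\mathtt{sumEmp}}(s+t)\sim s+t$; $\delta_{\mathtt{inl}(p)}(s+t)\sim s'$ if $\delta_p s\sim s'$; $\delta_{\mathtt{inr}(p)}(s+t)\sim t'$ if $\delta_p t\sim t'$; $\delta_{\mathtt{starEmp}}s^\star\sim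 s^\star$; $\delta_{\mathtt{starDone}}s^\star\sim\varepsilon$; $\delta_{\mathtt{stA}(p)}s^\star\sim s'\cdot s^\star$ if $\delta_p s\sim s'$; $\delta_{\mathtt{stB}(p,p')}s^\star\sim s'$ if $\delta_{p'}s^\star\sim s'$. (For $p:s$ such $s'$ exists and is unique.) Prefix concatenation $p\cdot p'\sim p''$ (inductive): $\mathtt{epsEmp}\cdot\mathtt{epsEmp}\sim\mathtt{epsEmp}$; $\mathtt{oneEmp}\cdot p\sim p$ whenever $p:1$; $\mathtt{oneFull}\cdot\mathtt{epsEmp}\sim\mathtt{oneFull}$; $\mathtt{par}(p_1,p_2)\cdot\mathtt{par}(p_1',p_2')\sim\mathtt{par}(p_1'',p_2'')$ if $p_i\cdot p_i'\sim p_i''$ for $i=1,2$; $\mathtt{catA}(p)\cdot\mathtt{catA}(p')\sim\mathtt{catA}(p'')$ if $p\cdot p'\sim p''$; $\mathtt{catA}(p)\cdot\mathtt{catB}(p',q)\sim\mathtt{catB}(p'',q)$ if $p\cdot p'\sim p''$; $\mathtt{catB}(p,p')\cdot p''\sim\mathtt{catB}(p,p''')$ if $p'\cdot p''\sim p'''$; $\mathtt{sumEmp}\cdot p\sim p$; $\mathtt{inl}(p)\cdot p'\sim\mathtt{inl}(p'')$ if $p\cdot p'\sim p''$; $\mathtt{inr}(p)\cdot p'\sim\mathtt{inr}(p'')$ if $p\cdot p'\sim p''$; $\mathtt{starEmp}\cdot p\sim p$; $\mathtt{starDone}\cdot\mathtt{epsEmp}\sim\mathtt{starDone}$; $\mathtt{stA}(p)\cdot\mathtt{catA}(p')\sim\mathtt{stA}(p'')$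 if $p\cdot p'\sim p''$; $\mathtt{stA}(p)\cdot\mathtt{catB}(p',q)\sim\mathtt{stB}(p'',q)$ if $p\cdot p'\sim p''$; $\mathtt{stB}(p,p')\cdot p''\sim\mathtt{stB}(p,p''')$ if $p'\cdot p''\sim p'''$. *)

theory Defs
  imports Main
begin

datatype stype = One | Eps | Cat stype stype | Par stype stype | Sum stype stype | Star stype

datatype prefix = OneEmp | OneFull | EpsEmp | PPar prefix prefix | CatA prefix | CatB prefix prefix
  | SumEmp | Inl prefix | Inr prefix | StarEmp | StarDone | StA prefix | StB prefix prefix

inductive maximal :: "prefix \<Rightarrow> bool" where
  "maximal EpsEmp"
| "maximal OneFull"
| "maximal StarDone"
| "maximal p1 \<Longrightarrow> maximal p2 \<Longrightarrow> maximal (PPar p1 p2)"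
| "maximal p1 \<Longrightarrow> maximal p2 \<Longrightarrow> maximal (CatB p1 p2)"
| "maximal p1 \<Longrightarrow> maximal p2 \<Longrightarrow> maximal (StB p1 p2)"
| "maximal p \<Longrightarrow> maximal (Inl p)"
| "maximal p \<Longrightarrow> maximal (Inr p)"

inductive has_type :: "prefix \<Rightarrow> stype \<Rightarrow> bool" where
  "has_type EpsEmp Eps"
| "has_type OneEmp One"
| "has_type OneFull One"
| "has_type p1 s \<Longrightarrow> has_type p2 t \<Longrightarrow> has_type (PPar p1 p2) (Par s t)"
| "has_type p s \<Longrightarrow> has_type (CatA p) (Cat s t)"
| "has_type p1 s \<Longrightarrow> maximal p1 \<Longrightarrow> has_type p2 t \<Longrightarrow> has_type (CatB p1 p2) (Cat s t)"
| "has_type SumEmp (Sum s t)"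
| "has_type p s \<Longrightarrow> has_type (Inl p) (Sum s t)"
| "has_type p t \<Longrightarrow> has_type (Inr p) (Sum s t)"
| "has_type StarEmp (Star s)"
| "has_type StarDone (Star s)"
| "has_type p s \<Longrightarrow> has_type (StA p) (Star s)"
| "has_type p s \<Longrightarrow> maximal p \<Longrightarrow> has_type p' (Star s) \<Longrightarrow> has_type (StB p p') (Star s)"

fun emp :: "stype \<Rightarrow> prefix" where
  "emp Eps = EpsEmp"
| "emp One = OneEmp"
| "emp (Par s t) = PPar (emp s) (emp t)"
| "emp (Sum s t) = SumEmp"
| "emp (Cat s t) = CatA (emp s)"
| "emp (Star s) = StarEmp"

inductive deriv :: "prefix \<Rightarrow> stype \<Rightarrow> stype \<Rightarrow> bool" where
  "deriv EpsEmp Eps Eps"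
| "deriv OneEmp One One"
| "deriv OneFull One Eps"
| "deriv p1 s s' \<Longrightarrow> deriv p2 t t' \<Longrightarrow> deriv (PPar p1 p2) (Par s t) (Par s' t')"
| "deriv p s s' \<Longrightarrow> deriv (CatA p) (Cat s t) (Cat s' t)"
| "deriv p2 t t' \<Longrightarrow> deriv (CatB p1 p2) (Cat s t) t'"
| "deriv SumEmp (Sum s t) (Sum s t)"
| "deriv p s s' \<Longrightarrow> deriv (Inl p) (Sum s t) s'"
| "deriv p t t' \<Longrightarrow> deriv (Inr p) (Sum s t) t'"
| "deriv StarEmp (Star s) (Star s)"
| "deriv StarDone (Star s) Eps"
| "deriv p s s' \<Longrightarrow> deriv (StA p) (Star s) (Cat s' (Star s))"
| "deriv p' (Star s) s' \<Longrightarrow> deriv (StB p p') (Star s) s'"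

inductive pconcat :: "prefix \<Rightarrow> prefix \<Rightarrow> prefix \<Rightarrow> bool" where
  "pconcat EpsEmp EpsEmp EpsEmp"
| "has_type p One \<Longrightarrow> pconcat OneEmp p p"
| "pconcat OneFull EpsEmp OneFull"
| "pconcat p1 p1' p1'' \<Longrightarrow> pconcat p2 p2' p2'' \<Longrightarrow> pconcat (PPar p1 p2) (PPar p1' p2') (PPar p1'' p2'')"
| "pconcat p p' p'' \<Longrightarrow> pconcat (CatA p) (CatA p') (CatA p'')"
| "pconcat p p' p'' \<Longrightarrow> pconcat (CatA p) (CatB p' q) (CatB p'' q)"
| "pconcat p' p'' p''' \<Longrightarrow> pconcat (CatB p p') p'' (CatB p p''')"
| "pconcat SumEmp p p"
| "pconcat p p' p'' \<Longrightarrow> pconcat (Inl p) p' (Inl p'')"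
| "pconcat p p' p'' \<Longrightarrow> pconcat (Inr p) p' (Inr p'')"
| "pconcat StarEmp p p"
| "pconcat StarDone EpsEmp StarDone"
| "pconcat p p' p'' \<Longrightarrow> pconcat (StA p) (CatA p') (StA p'')"
| "pconcat p p' p'' \<Longrightarrow> pconcat (StA p) (CatB p' q) (StB p'' q)"
| "pconcat p' p'' p''' \<Longrightarrow> pconcat (StB p p') p'' (StB p p''')"

end

theory Submission
  imports Defs
begin

lemma pconcat_emp_left:
  assumes "has_type p s"
  shows "pconcat (emp s) p p"
  using assms by induction (auto intro: pconcat.intros has_type.intros)

lemma pconcat_emp_right:
  assumes "deriv p s s'"
  shows "pconcat p (emp s') p"
  using assms by induction (auto intro: pconcat.intros has_type.intros)

theorem mainTheorem7:
  assumes "has_type p s" and "deriv p s s'"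
  shows "pconcat (emp s) p p \<and> pconcat p (emp s') p"
  using pconcat_emp_left[OF assms(1)] pconcat_emp_right[OF assms(2)] ..

end
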